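(* Let $\mathcal G$ be a finite (not necessarily connected) groupoid and $\alpha=(S_g,\alpha_g)_{g\in\mathcal G}$ a unital global action of $\mathcal G$ on a commutative ring $S=\bigoplus_{y\in\mathcal G_0}S_y$, with $S_g=S1_g$ and $1_g\ne0$ for all $g$, such that $S$ is an $\alpha$-partial Galois extension of $R=S^{\alpha_{\mathcal G}}$. Let $\mathcal G_1,\dots,\mathcal G_r$ be the connected components of $\mathcal G$. Let $\mathcal H$ be a wide subgroupoid of $\mathcal G$, put $\mathcal H_j=\mathcal H\cap\mathcal G_j$, let $\mathcal H_{j,1},\dots,\mathcal H_{j,n_j}$ be the connected components of $\mathcal H_j$ with object sets $Y_{j,1},\dots,Y_{j,n_j}$, and choose $y_{j,i}\in Y_{j,i}$. Then $$S^{\alpha_{\mathcal H}}\simeq\bigoplus_{j=1}^r\bigoplus_{i=1}^{n_j}S_{y_{j,i}}^{\alpha_{\mathcal H_{j,i}(y_{j,i})}}.$$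
   Context: A groupoid is a small category with all morphisms invertible; $\mathcal G_0$ is its object set (identified with identity morphisms), $s(g),t(g)$ source and target, $\mathcal G(x,y)=\{g:s(g)=x,t(g)=y\}$, $\mathcal G(x)=\mathcal G(x,x)$; $gh$ defined iff $s(g)=t(h)$; connected components are full subgroupoids on classes of $x\sim y\iff\mathcal G(x,y)\ne\emptyset$; a subgroupoid is wide if it contains all objects. A partial action $\alpha=(S_g,\alpha_g)_{g\in\mathcal G}$ on a ring $S$: for each $g$, $S_{t(g)}$ is an ideal of $S$, $S_g$ an ideal of $S_{t(g)}$, $\alpha_g:S_{g^{-1}}\to S_g$ a ring isomorphism; $\alpha_x=\mathrm{id}_{S_x}$; for composable $(g,h)$, $\alpha_h^{-1}(S_{g^{-1}}\cap S_h)\subseteq S_{(gh)^{-1}}$ and $\alpha_g\alpha_h(a)=\alpha_{gh}(a)$ there. It is global if $\alpha_g\alpha_h=\alpha_{gh}$ for all composable pairs; unital if $S_g=S1_g$ with $1_g$ a central idempotent. For a subgroupoid $\mathcal K$ and subring $A\subseteq S$, $A^{\alpha_{\mathcal K}}=\{a\in A:\alpha_k(a1_{k^{-1}})=a1_k\ \forall k\in\mathcal K\}$; in particular $S_{y}^{\alpha_{\mathcal H_{j,i}(y)}}$ is the subring of $S_y$ fixed by the isotropy group $\mathcal H_{j,i}(y)$. $S$ is an $\alpha$-partial Galois extension of $R=S^{\alpha_{\mathcal G}}$ if there exist $m\ge1$, $a_i,b_i\in S$ with $\sum_{i=1}^m a_i\alpha_g(b_i1_{g^{-1}})=\delta_{z,g}1_z$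 for all $z\in\mathcal G_0$, $g\in\mathcal G$ (i.e. $1_g$ if $g\in\mathcal G_0$, $0$ otherwise). *)

theory Defs
  imports Main "HOL-Library.FuncSet"
begin

(* Objects are identified with identity morphisms: G0 = s ` G. *)

definition groupoid ::
  "'g set \<Rightarrow> ('g \<Rightarrow> 'g) \<Rightarrow> ('g \<Rightarrow> 'g) \<Rightarrow> ('g \<Rightarrow> 'g \<Rightarrow> 'g) \<Rightarrow> ('g \<Rightarrow> 'g) \<Rightarrow> bool" where
  "groupoid G s t m iv \<longleftrightarrow>
     (\<forall>g\<in>G. s g \<in> G \<and> t g \<in> G \<and> s (s g) = s g \<and> t (s g) = s g
             \<and> s (t g) = t g \<and> t (t g) = t g) \<and>
     (\<forall>g\<in>G. \<forall>h\<in>G. s g = t h \<longrightarrow> m g h \<in> G \<and> s (m g h) = s h \<and> t (m g h) = t g) \<and>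
     (\<forall>f\<in>G. \<forall>g\<in>G. \<forall>h\<in>G. s f = t g \<longrightarrow> s g = t h \<longrightarrow> m (m f g) h = m f (m g h)) \<and>
     (\<forall>g\<in>G. m (t g) g = g \<and> m g (s g) = g) \<and>
     (\<forall>g\<in>G. iv g \<in> G \<and> s (iv g) = t g \<and> t (iv g) = s g
             \<and> m g (iv g) = t g \<and> m (iv g) g = s g)"

definition objs :: "'g set \<Rightarrow> ('g \<Rightarrow> 'g) \<Rightarrow> 'g set" where
  "objs G s = s ` G"

definition subgroupoid ::
  "'g set \<Rightarrow> 'g set \<Rightarrow> ('g \<Rightarrow> 'g) \<Rightarrow> ('g \<Rightarrow> 'g) \<Rightarrow> ('g \<Rightarrow> 'g \<Rightarrow> 'g) \<Rightarrow> ('g \<Rightarrow> 'g) \<Rightarrow> bool" where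
  "subgroupoid H G s t m iv \<longleftrightarrow> H \<subseteq> G \<and>
     (\<forall>h\<in>H. s h \<in> H \<and> t h \<in> H \<and> iv h \<in> H) \<and>
     (\<forall>g\<in>H. \<forall>h\<in>H. s g = t h \<longrightarrow> m g h \<in> H)"

definition wide_subgroupoid ::
  "'g set \<Rightarrow> 'g set \<Rightarrow> ('g \<Rightarrow> 'g) \<Rightarrow> ('g \<Rightarrow> 'g) \<Rightarrow> ('g \<Rightarrow> 'g \<Rightarrow> 'g) \<Rightarrow> ('g \<Rightarrow> 'g) \<Rightarrow> bool" where
  "wide_subgroupoid H G s t m iv \<longleftrightarrow> subgroupoid H G s t m iv \<and> objs G s \<subseteq> H"

definition gconn :: "'g set \<Rightarrow> ('g \<Rightarrow> 'g) \<Rightarrow> ('g \<Rightarrow> 'g) \<Rightarrow> 'g \<Rightarrow> 'g \<Rightarrow> bool" where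
  "gconn K s t x y \<longleftrightarrow> (\<exists>k\<in>K. s k = x \<and> t k = y)"

definition components :: "'g set \<Rightarrow> ('g \<Rightarrow> 'g) \<Rightarrow> ('g \<Rightarrow> 'g) \<Rightarrow> 'g set set" where
  "components K s t =
     {{k \<in> K. s k \<in> {y \<in> objs K s. gconn K s t x y}} | x. x \<in> objs K s}"

definition isotropy :: "'g set \<Rightarrow> ('g \<Rightarrow> 'g) \<Rightarrow> ('g \<Rightarrow> 'g) \<Rightarrow> 'g \<Rightarrow> 'g set" where
  "isotropy K s t y = {k \<in> K. s k = y \<and> t k = y}"

(* the ideal S_g = S 1_g of a unital partial action, with e g = 1_g *)
definition Sg :: "('g \<Rightarrow> 'a::comm_ring_1) \<Rightarrow> 'g \<Rightarrow> 'a set" where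
  "Sg e g = {a * e g | a. True}"

(* unital partial action (S_g = S 1_g, 1_g central idempotent) of the groupoid G on the
   commutative ring S (= UNIV of type 'a) *)
definition unital_partial_action ::
  "'g set \<Rightarrow> ('g \<Rightarrow> 'g) \<Rightarrow> ('g \<Rightarrow> 'g) \<Rightarrow> ('g \<Rightarrow> 'g \<Rightarrow> 'g) \<Rightarrow> ('g \<Rightarrow> 'g)
    \<Rightarrow> ('g \<Rightarrow> 'a::comm_ring_1) \<Rightarrow> ('g \<Rightarrow> 'a \<Rightarrow> 'a) \<Rightarrow> bool" where
  "unital_partial_action G s t m iv e \<alpha> \<longleftrightarrow>
     (\<forall>g\<in>G. e g * e g = e g) \<and>
     (\<forall>g\<in>G. e g * e (t g) = e g) \<and>
     (\<forall>g\<in>G. bij_betw (\<alpha> g) (Sg e (iv g)) (Sg e g) \<and>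
        (\<forall>a\<in>Sg e (iv g). \<forall>b\<in>Sg e (iv g).
            \<alpha> g (a + b) = \<alpha> g a + \<alpha> g b \<and> \<alpha> g (a * b) = \<alpha> g a * \<alpha> g b)) \<and>
     (\<forall>x\<in>objs G s. \<forall>a\<in>Sg e x. \<alpha> x a = a) \<and>
     (\<forall>g\<in>G. \<forall>h\<in>G. s g = t h \<longrightarrow>
        {a \<in> Sg e (iv h). \<alpha> h a \<in> Sg e (iv g) \<inter> Sg e h} \<subseteq> Sg e (iv (m g h)) \<and>
        (\<forall>a \<in> Sg e (iv h). \<alpha> h a \<in> Sg e (iv g) \<inter> Sg e h \<longrightarrow>
            \<alpha> g (\<alpha> h a) = \<alpha> (m g h) a))"

definition global_action ::
  "'g set \<Rightarrow> ('g \<Rightarrow> 'g) \<Rightarrow> ('g \<Rightarrow> 'g) \<Rightarrow> ('g \<Rightarrow> 'g \<Rightarrow> 'g) \<Rightarrow> ('g \<Rightarrow> 'g)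
    \<Rightarrow> ('g \<Rightarrow> 'a::comm_ring_1) \<Rightarrow> ('g \<Rightarrow> 'a \<Rightarrow> 'a) \<Rightarrow> bool" where
  "global_action G s t m iv e \<alpha> \<longleftrightarrow>
     (\<forall>g\<in>G. \<forall>h\<in>G. s g = t h \<longrightarrow>
        {a \<in> Sg e (iv h). \<alpha> h a \<in> Sg e (iv g)} = Sg e (iv (m g h)) \<and>
        (\<forall>a \<in> Sg e (iv (m g h)). \<alpha> g (\<alpha> h a) = \<alpha> (m g h) a))"

definition fixed_ring ::
  "'g set \<Rightarrow> ('g \<Rightarrow> 'g) \<Rightarrow> ('g \<Rightarrow> 'a::comm_ring_1) \<Rightarrow> ('g \<Rightarrow> 'a \<Rightarrow> 'a) \<Rightarrow> 'a set \<Rightarrow> 'a set" where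
  "fixed_ring K iv e \<alpha> A = {a \<in> A. \<forall>k\<in>K. \<alpha> k (a * e (iv k)) = a * e k}"

definition partial_galois ::
  "'g set \<Rightarrow> ('g \<Rightarrow> 'g) \<Rightarrow> ('g \<Rightarrow> 'g) \<Rightarrow> ('g \<Rightarrow> 'a::comm_ring_1) \<Rightarrow> ('g \<Rightarrow> 'a \<Rightarrow> 'a) \<Rightarrow> bool" where
  "partial_galois G s iv e \<alpha> \<longleftrightarrow>
     (\<exists>n::nat. \<exists>a b :: nat \<Rightarrow> 'a. n \<ge> 1 \<and>
        (\<forall>g\<in>G. (\<Sum>i<n. a i * \<alpha> g (b i * e (iv g))) =
                 (if g \<in> objs G s then e g else 0)))"

end

(* The isomorphism is a |-> (a 1_y)_y, y running over the chosen objects y_{j,i}.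
   The 1_x, x an object, are orthogonal idempotents summing to 1, so a is determined by its
   components a 1_x.  If a is H-invariant and h : y -> x lies in H, then a 1_x = alpha_h (a 1_y);
   hence a is determined by its components at one object of each H-connectivity class, and these
   are fixed by the isotropy groups.  Conversely, an isotropy-invariant b in S_y can be transported
   along any arrow of H from y to x, the result being independent of the arrow because two such
   arrows differ by an isotropy element; summing the transports over all objects gives an
   H-invariant preimage.  The objects y_{j,i} are one per H-connectivity class. *)

theory Submission
  imports Defs
begin

definition connectivity_transversal ::
  "'g set \<Rightarrow> ('g \<Rightarrow> 'g) \<Rightarrow> ('g \<Rightarrow> 'g) \<Rightarrow> 'g set \<Rightarrow> 'p set \<Rightarrow> ('p \<Rightarrow> 'g) \<Rightarrow> bool" where
  "connectivity_transversal K s t X P r \<longleftrightarrow>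
     r ` P \<subseteq> X \<and> (\<forall>x\<in>X. \<exists>p\<in>P. gconn K s t (r p) x) \<and>
     (\<forall>p\<in>P. \<forall>q\<in>P. gconn K s t (r p) (r q) \<longrightarrow> p = q)"

section \<open>Groupoids and their connected components\<close>

locale groupoid_setting =
  fixes G :: "'g set" and s t iv :: "'g \<Rightarrow> 'g" and m :: "'g \<Rightarrow> 'g \<Rightarrow> 'g"
  assumes groupoid: "groupoid G s t m iv"
begin

lemma source_target:
  assumes "g \<in> G"
  shows "s g \<in> G" "t g \<in> G" "s (s g) = s g" "t (s g) = s g" "s (t g) = t g" "t (t g) = t g"
  using groupoid assms unfolding groupoid_def by blast+

lemma comp_closed:
  assumes "g \<in> G" "h \<in> G" "s g = t h"
  shows "m g h \<in> G" "s (m g h) = s h" "t (m g h) = t g"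
  using groupoid assms unfolding groupoid_def by blast+

lemma comp_assoc:
  "f \<in> G \<Longrightarrow> g \<in> G \<Longrightarrow> h \<in> G \<Longrightarrow> s f = t g \<Longrightarrow> s g = t h \<Longrightarrow> m (m f g) h = m f (m g h)"
  using groupoid unfolding groupoid_def by blast

lemma comp_identities:
  assumes "g \<in> G"
  shows "m (t g) g = g" "m g (s g) = g"
  using groupoid assms unfolding groupoid_def by blast+

lemma inverse_laws:
  assumes "g \<in> G"
  shows "iv g \<in> G" "s (iv g) = t g" "t (iv g) = s g" "m g (iv g) = t g" "m (iv g) g = s g"
  using groupoid assms unfolding groupoid_def by blast+

lemma inverse_inverse:
  assumes g: "g \<in> G"
  shows "iv (iv g) = g"
proof -
  have "iv (iv g) = m (iv (iv g)) (m (iv g) g)"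
    using comp_identities(2) inverse_laws g by metis
  also have "\<dots> = m (m (iv (iv g)) (iv g)) g"
    using comp_assoc inverse_laws g by metis
  also have "\<dots> = g"
    using comp_identities(1) inverse_laws g by metis
  finally show ?thesis .
qed

lemma objD:
  assumes "x \<in> objs G s"
  shows "x \<in> G" "s x = x" "t x = x" "iv x = x"
proof -
  obtain g where g: "g \<in> G" "x = s g"
    using assms unfolding objs_def by blast
  show x: "x \<in> G" "s x = x" "t x = x"
    using source_target g by simp_all
  have "iv x = m (t (iv x)) (iv x)"
    using comp_identities(1) inverse_laws(1) x(1) by metis
  also have "\<dots> = m x (iv x)"
    using inverse_laws(3) x by simp
  also have "\<dots> = x"
    using inverse_laws(4) x by simp
  finally show "iv x = x" .
qed

lemma objs_mono: "A \<subseteq> B \<Longrightarrow> objs A s \<subseteq> objs B s"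
  unfolding objs_def by blast

lemma gconn_mono: "A \<subseteq> B \<Longrightarrow> gconn A s t x z \<Longrightarrow> gconn B s t x z"
  unfolding gconn_def by blast

lemma subgroupoid_self: "subgroupoid G G s t m iv"
  unfolding subgroupoid_def using source_target(1,2) inverse_laws(1) comp_closed(1) by blast

context
  fixes K assumes K: "subgroupoid K G s t m iv"
begin

lemma subgroupoid_subset: "K \<subseteq> G"
  using K unfolding subgroupoid_def by blast

lemma subgroupoid_closed:
  assumes "k \<in> K"
  shows "s k \<in> K" "t k \<in> K" "iv k \<in> K"
  using K assms unfolding subgroupoid_def by blast+

lemma subgroupoid_comp_closed: "g \<in> K \<Longrightarrow> h \<in> K \<Longrightarrow> s g = t h \<Longrightarrow> m g h \<in> K"
  using K unfolding subgroupoid_def by blast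

lemma gconn_refl:
  assumes "x \<in> objs K s"
  shows "gconn K s t x x"
proof -
  obtain k where k: "k \<in> K" "x = s k"
    using assms unfolding objs_def by blast
  then have "s k \<in> K" "s (s k) = s k" "t (s k) = s k"
    using subgroupoid_closed(1) subgroupoid_subset source_target(3,4) by auto
  then show ?thesis
    unfolding gconn_def k by blast
qed

lemma gconn_sym: "gconn K s t x z \<Longrightarrow> gconn K s t z x"
  unfolding gconn_def using subgroupoid_closed subgroupoid_subset inverse_laws by blast

lemma gconn_trans: "gconn K s t x z \<Longrightarrow> gconn K s t z w \<Longrightarrow> gconn K s t x w"
  unfolding gconn_def
  using subgroupoid_comp_closed subgroupoid_subset comp_closed(2,3) by (metis subsetD)

lemma component_subset: "C \<in> components K s t \<Longrightarrow> C \<subseteq> K"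
  unfolding components_def by blast

lemma mem_component_iff:
  assumes C: "C \<in> components K s t" and z: "z \<in> objs C s"
  shows "k \<in> C \<longleftrightarrow> k \<in> K \<and> gconn K s t z (s k)"
proof -
  obtain x where C_eq: "C = {k \<in> K. gconn K s t x (s k)}"
    using C unfolding components_def objs_def by auto
  have "gconn K s t x z"
    using z unfolding C_eq objs_def by blast
  then show ?thesis
    unfolding C_eq using gconn_sym gconn_trans by blast
qed

lemma component_at:
  assumes x: "x \<in> objs K s"
  obtains C where "C \<in> components K s t" "x \<in> objs C s"
proof
  show "{k \<in> K. gconn K s t x (s k)} \<in> components K s t"
    using x unfolding components_def objs_def by blast
  have "x \<in> K" "s x = x"
    using x subgroupoid_closed(1) source_target(3) subgroupoid_subset
    unfolding objs_def by blast+
  then have "x \<in> {k \<in> K. gconn K s t x (s k)}"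
    using gconn_refl[OF x] by simp
  then show "x \<in> objs {k \<in> K. gconn K s t x (s k)} s"
    using \<open>s x = x\<close> unfolding objs_def by (metis image_eqI)
qed

lemma component_unique:
  assumes "C \<in> components K s t" "C' \<in> components K s t"
    and "z \<in> objs C s" "z' \<in> objs C' s" "gconn K s t z z'"
  shows "C = C'"
proof -
  have "k \<in> C \<longleftrightarrow> k \<in> C'" for k
    using assms mem_component_iff gconn_sym gconn_trans by meson
  then show ?thesis by blast
qed

lemma objs_component_subset:
  assumes C: "C \<in> components K s t"
  shows "objs C s \<subseteq> C"
proof
  fix z assume z: "z \<in> objs C s"
  then obtain c where c: "c \<in> C" "z = s c"
    unfolding objs_def by blast
  have "c \<in> K"
    using c(1) component_subset[OF C] by blast
  then have "z \<in> K" "s z = z" "z \<in> objs K s"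
    using c(2) subgroupoid_closed(1) subgroupoid_subset source_target(3) unfolding objs_def by auto
  then show "z \<in> C"
    using mem_component_iff[OF C z] gconn_refl by simp
qed

lemma component_objs_gconn:
  assumes C: "C \<in> components K s t" and z: "z \<in> objs C s" and z': "z' \<in> objs C s"
  shows "gconn K s t z z'"
proof -
  obtain c where c: "c \<in> C" "z' = s c"
    using z' unfolding objs_def by blast
  then have "c \<in> G"
    using component_subset[OF C] subgroupoid_subset by blast
  then have "s z' = z'"
    using c(2) source_target(3) by simp
  moreover have "z' \<in> C"
    using z' objs_component_subset[OF C] by blast
  ultimately show ?thesis
    using mem_component_iff[OF C z] by simp
qed

end

lemma subgroupoid_Int_component:
  assumes H: "subgroupoid H G s t m iv" and Gj: "Gj \<in> components G s t"
  shows "subgroupoid (H \<inter> Gj) G s t m iv"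
proof -
  have HG: "H \<subseteq> G"
    using H unfolding subgroupoid_def by blast
  have into_Gj: "k \<in> Gj" if h: "h \<in> Gj" and k: "k \<in> G" "gconn G s t (s h) (s k)" for h k
  proof -
    have "s h \<in> objs Gj s"
      using h unfolding objs_def by blast
    then show ?thesis
      using mem_component_iff[OF subgroupoid_self Gj] k by blast
  qed
  have conn: "gconn G s t (s h) (s (s h))" "gconn G s t (s h) (s (t h))" if h: "h \<in> G" for h
    using gconn_refl[OF subgroupoid_self, of "s h"] h source_target(3,5)
    unfolding gconn_def objs_def by auto
  have closed: "s h \<in> H \<inter> Gj \<and> t h \<in> H \<inter> Gj \<and> iv h \<in> H \<inter> Gj" if h: "h \<in> H \<inter> Gj" for h
  proof -
    have hG: "h \<in> G"
      using h HG by blast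
    have "s h \<in> Gj" "t h \<in> Gj"
      using into_Gj[of h] h conn[OF hG] source_target(1,2)[OF hG] by auto
    moreover have "iv h \<in> Gj"
      using into_Gj[of h "iv h"] h conn(2)[OF hG] inverse_laws(1,2)[OF hG] source_target(5)[OF hG] by simp
    ultimately show ?thesis
      using H h unfolding subgroupoid_def by blast
  qed
  have "m g h \<in> H \<inter> Gj" if g: "g \<in> H \<inter> Gj" and h: "h \<in> H \<inter> Gj" and gh: "s g = t h" for g h
  proof -
    have "g \<in> G" "h \<in> G"
      using g h HG by blast+
    then have "m g h \<in> G" "s (m g h) = s h"
      using gh comp_closed(1,2) by blast+
    then have "m g h \<in> Gj"
      using into_Gj[of h "m g h"] h conn(1)[OF \<open>h \<in> G\<close>] source_target(3)[OF \<open>h \<in> G\<close>] by simp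
    then show ?thesis
      using H g h gh unfolding subgroupoid_def by blast
  qed
  then show ?thesis
    using HG closed unfolding subgroupoid_def by blast
qed

lemma isotropy_component:
  assumes H: "subgroupoid H G s t m iv" and Gj: "Gj \<in> components G s t"
    and C: "C \<in> components (H \<inter> Gj) s t" and z: "z \<in> objs C s"
  shows "isotropy C s t z = isotropy H s t z"
proof
  have HGj: "subgroupoid (H \<inter> Gj) G s t m iv"
    using subgroupoid_Int_component[OF H Gj] .
  have C_sub: "C \<subseteq> H \<inter> Gj"
    using component_subset[OF HGj C] .
  then show "isotropy C s t z \<subseteq> isotropy H s t z"
    unfolding isotropy_def by blast
  have z_Gj: "z \<in> objs Gj s" and z_HGj: "z \<in> objs (H \<inter> Gj) s"
    using z C_sub objs_mono by blast+
  show "isotropy H s t z \<subseteq> isotropy C s t z"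
  proof
    fix k assume k: "k \<in> isotropy H s t z"
    then have "k \<in> G"
      using H unfolding isotropy_def subgroupoid_def by blast
    then have "k \<in> Gj"
      using k mem_component_iff[OF subgroupoid_self Gj z_Gj]
        gconn_refl[OF subgroupoid_self] z_Gj component_subset[OF subgroupoid_self Gj] objs_mono
      unfolding isotropy_def by blast
    then show "k \<in> isotropy C s t z"
      using k mem_component_iff[OF HGj C z] gconn_refl[OF HGj z_HGj] unfolding isotropy_def by auto
  qed
qed

lemma wide_subgroupoidD:
  assumes "wide_subgroupoid H G s t m iv"
  shows "subgroupoid H G s t m iv" "objs G s \<subseteq> H"
  using assms unfolding wide_subgroupoid_def by blast+

context
  fixes H and y :: "'g set \<Rightarrow> 'g set \<Rightarrow> 'g"
  assumes wide: "wide_subgroupoid H G s t m iv"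
    and y: "\<forall>Gj\<in>components G s t. \<forall>C\<in>components (H \<inter> Gj) s t. y Gj C \<in> objs C s"
begin

lemma component_representative_objs:
  assumes Gj: "Gj \<in> components G s t" and C: "C \<in> components (H \<inter> Gj) s t"
  shows "y Gj C \<in> objs C s" "y Gj C \<in> objs Gj s" "y Gj C \<in> objs G s"
proof -
  show "y Gj C \<in> objs C s"
    using y Gj C by blast
  moreover have "C \<subseteq> Gj" "Gj \<subseteq> G"
    using component_subset[OF subgroupoid_Int_component[OF wide_subgroupoidD(1)[OF wide] Gj] C]
      component_subset[OF subgroupoid_self Gj] by blast+
  ultimately show "y Gj C \<in> objs Gj s" "y Gj C \<in> objs G s"
    using objs_mono by blast+
qed

lemma component_representative_reaches:
  assumes x: "x \<in> objs G s"
  obtains Gj C where "Gj \<in> components G s t" "C \<in> components (H \<inter> Gj) s t" "gconn H s t (y Gj C) x"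
proof -
  obtain Gj where Gj: "Gj \<in> components G s t" "x \<in> objs Gj s"
    using component_at[OF subgroupoid_self x] .
  have HGj: "subgroupoid (H \<inter> Gj) G s t m iv"
    using subgroupoid_Int_component[OF wide_subgroupoidD(1)[OF wide] Gj(1)] .
  have "x \<in> H" "x \<in> Gj" "s x = x"
    using x wide_subgroupoidD(2)[OF wide] objs_component_subset[OF subgroupoid_self Gj(1)] Gj(2) objD(2) by auto
  then have "x \<in> objs (H \<inter> Gj) s"
    unfolding objs_def by (metis IntI image_eqI)
  then obtain C where C: "C \<in> components (H \<inter> Gj) s t" "x \<in> objs C s"
    using component_at[OF HGj] by blast
  then have "gconn (H \<inter> Gj) s t (y Gj C) x"
    using component_objs_gconn[OF HGj] component_representative_objs(1)[OF Gj(1)] by blast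
  then show ?thesis
    using that Gj(1) C(1) gconn_mono[of "H \<inter> Gj" H] by blast
qed

lemma component_representatives_unique:
  assumes Gj: "Gj \<in> components G s t" "C \<in> components (H \<inter> Gj) s t"
    and Gj': "Gj' \<in> components G s t" "C' \<in> components (H \<inter> Gj') s t"
    and conn: "gconn H s t (y Gj C) (y Gj' C')"
  shows "Gj = Gj'" "C = C'"
proof -
  have HG: "H \<subseteq> G"
    using subgroupoid_subset[OF wide_subgroupoidD(1)[OF wide]] .
  note y_objs = component_representative_objs[OF Gj] component_representative_objs[OF Gj']
  show "Gj = Gj'"
    using component_unique[OF subgroupoid_self Gj(1) Gj'(1)] y_objs gconn_mono[OF HG conn] by blast
  obtain h where h: "h \<in> H" "s h = y Gj C" "t h = y Gj' C'"
    using conn unfolding gconn_def by blast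
  have "h \<in> Gj"
    using mem_component_iff[OF subgroupoid_self Gj(1) y_objs(2)] h HG
      gconn_refl[OF subgroupoid_self y_objs(3)] by auto
  then have "gconn (H \<inter> Gj) s t (y Gj C) (y Gj' C')"
    using h unfolding gconn_def by blast
  then show "C = C'"
    using component_unique[OF subgroupoid_Int_component[OF wide_subgroupoidD(1)[OF wide] Gj(1)] Gj(2)] Gj'(2)
      y_objs(1,4) \<open>Gj = Gj'\<close> by blast
qed

lemma component_representatives_transversal:
  "connectivity_transversal H s t (objs G s)
     {(Gj, C). Gj \<in> components G s t \<and> C \<in> components (H \<inter> Gj) s t} (\<lambda>(Gj, C). y Gj C)"
  unfolding connectivity_transversal_def
proof (intro conjI ballI impI)
  show "(\<lambda>(Gj, C). y Gj C) ` {(Gj, C). Gj \<in> components G s t \<and> C \<in> components (H \<inter> Gj) s t}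
      \<subseteq> objs G s"
    using component_representative_objs(3) by auto
next
  fix x assume "x \<in> objs G s"
  then show "\<exists>p\<in>{(Gj, C). Gj \<in> components G s t \<and> C \<in> components (H \<inter> Gj) s t}.
      gconn H s t (case p of (Gj, C) \<Rightarrow> y Gj C) x"
    by (rule component_representative_reaches) force
next
  fix p q assume pq: "p \<in> {(Gj, C). Gj \<in> components G s t \<and> C \<in> components (H \<inter> Gj) s t}"
    "q \<in> {(Gj, C). Gj \<in> components G s t \<and> C \<in> components (H \<inter> Gj) s t}"
    "gconn H s t (case p of (Gj, C) \<Rightarrow> y Gj C) (case q of (Gj, C) \<Rightarrow> y Gj C)"
  obtain Gj C Gj' C' where "p = (Gj, C)" "q = (Gj', C')"
    by (cases p, cases q)
  then show "p = q"
    using pq component_representatives_unique[of Gj C Gj' C'] by simp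
qed

end

end

section \<open>Unital global actions\<close>

locale unital_global_action = groupoid_setting G s t iv m
  for G :: "'g set" and s t iv :: "'g \<Rightarrow> 'g" and m :: "'g \<Rightarrow> 'g \<Rightarrow> 'g" +
  fixes e :: "'g \<Rightarrow> 'a::comm_ring_1" and \<alpha> :: "'g \<Rightarrow> 'a \<Rightarrow> 'a"
  assumes unital: "unital_partial_action G s t m iv e \<alpha>"
    and global: "global_action G s t m iv e \<alpha>"
begin

lemma unit_idem: "g \<in> G \<Longrightarrow> e g * e g = e g"
  using unital unfolding unital_partial_action_def by blast

lemma mem_Sg_iff: "g \<in> G \<Longrightarrow> b \<in> Sg e g \<longleftrightarrow> b * e g = b"
  unfolding Sg_def using unit_idem by (auto simp: mult.assoc) metis

lemma action_in_Sg: "g \<in> G \<Longrightarrow> b \<in> Sg e (iv g) \<Longrightarrow> \<alpha> g b \<in> Sg e g"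
  using unital unfolding unital_partial_action_def bij_betw_def by blast

lemma action_comp:
  "g \<in> G \<Longrightarrow> h \<in> G \<Longrightarrow> s g = t h \<Longrightarrow> b \<in> Sg e (iv (m g h)) \<Longrightarrow> \<alpha> g (\<alpha> h b) = \<alpha> (m g h) b"
  using global unfolding global_action_def by blast

lemma unit_inverse:
  assumes g: "g \<in> G"
  shows "e (iv g) = e (s g)"
proof -
  have "Sg e (s g) = {b \<in> Sg e (iv g). \<alpha> g b \<in> Sg e (iv (iv g))}"
    using global inverse_laws[OF g] objD(4)[of "s g"] g unfolding global_action_def objs_def by force
  then have "e (s g) * e (iv g) = e (s g)"
    using mem_Sg_iff inverse_laws(1)[OF g] unit_idem source_target(1)[OF g] by blast
  moreover have "e (iv g) * e (s g) = e (iv g)"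
    using unital inverse_laws(1,3)[OF g] unfolding unital_partial_action_def by metis
  ultimately show ?thesis
    by (simp add: mult.commute)
qed

lemma unit_target: "g \<in> G \<Longrightarrow> e g = e (t g)"
  using unit_inverse[of "iv g"] inverse_laws(1,2) inverse_inverse by metis

lemma mem_fixed_ring_iff:
  "K \<subseteq> G \<Longrightarrow> a \<in> fixed_ring K iv e \<alpha> A \<longleftrightarrow> a \<in> A \<and> (\<forall>k\<in>K. \<alpha> k (a * e (s k)) = a * e (t k))"
  unfolding fixed_ring_def using unit_inverse unit_target by (auto simp: subset_iff)

lemma isotropy_fixes:
  assumes b: "b \<in> fixed_ring (isotropy K s t z) iv e \<alpha> (Sg e z)"
    and K: "K \<subseteq> G" and k: "k \<in> K" "s k = z" "t k = z"
  shows "\<alpha> k b = b"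
proof -
  have iso: "isotropy K s t z \<subseteq> G" "k \<in> isotropy K s t z"
    using K k unfolding isotropy_def by auto
  have "\<forall>k\<in>isotropy K s t z. \<alpha> k (b * e (s k)) = b * e (t k)"
    using b mem_fixed_ring_iff[OF iso(1)] by simp
  then have "\<alpha> k (b * e (s k)) = b * e (t k)"
    using iso(2) by blast
  then have "\<alpha> k (b * e z) = b * e z"
    using k by simp
  moreover have "z \<in> G"
    using K k source_target(1) by blast
  then have "b * e z = b"
    using b mem_Sg_iff unfolding fixed_ring_def by simp
  ultimately show ?thesis
    by simp
qed

lemma transport_independent:
  assumes K: "subgroupoid K G s t m iv"
    and b: "b \<in> fixed_ring (isotropy K s t z) iv e \<alpha> (Sg e z)"
    and h1: "h1 \<in> K" "s h1 = z" and k: "k \<in> K" "t h1 = s k"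
    and h2: "h2 \<in> K" "s h2 = z" "t h2 = t k"
  shows "\<alpha> k (\<alpha> h1 b) = \<alpha> h2 b"
proof -
  have KG: "K \<subseteq> G"
    using subgroupoid_subset[OF K] .
  define kh1 where "kh1 = m k h1"
  have kh1: "kh1 \<in> K" "kh1 \<in> G" "s kh1 = z" "t kh1 = t k"
    using subgroupoid_comp_closed[OF K k(1) h1(1)] comp_closed[of k h1] KG h1 k
    unfolding kh1_def by auto
  define g where "g = m (iv h2) kh1"
  have iv_h2: "iv h2 \<in> K" "iv h2 \<in> G" "s (iv h2) = t k" "t (iv h2) = z"
    using subgroupoid_closed[OF K h2(1)] inverse_laws[of h2] KG h2 by auto
  have g: "g \<in> K" "g \<in> G" "s g = z" "t g = z"
    using subgroupoid_comp_closed[OF K iv_h2(1) kh1(1)] comp_closed[of "iv h2" kh1] iv_h2 kh1 KG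
    unfolding g_def by auto
  have h2_g: "m h2 g = kh1"
  proof -
    have "m h2 g = m (m h2 (iv h2)) kh1"
      using comp_assoc[of h2 "iv h2" kh1] iv_h2 kh1 h2 KG unfolding g_def by auto
    also have "\<dots> = kh1"
      using inverse_laws(4)[of h2] comp_identities(1)[OF kh1(2)] kh1 h2 KG by auto
    finally show ?thesis .
  qed
  have b_Sg: "b \<in> Sg e (iv kh1)"
    using b unit_inverse[OF kh1(2)] kh1(3) unfolding fixed_ring_def Sg_def by simp
  have "\<alpha> k (\<alpha> h1 b) = \<alpha> kh1 b"
    using action_comp[of k h1 b] k h1 KG b_Sg unfolding kh1_def by auto
  also have "\<dots> = \<alpha> h2 (\<alpha> g b)"
    using action_comp[of h2 g b] h2 g KG b_Sg h2_g by auto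
  also have "\<alpha> g b = b"
    using isotropy_fixes[OF b KG g(1)] g by simp
  finally show ?thesis .
qed

end

section \<open>Decomposition of the invariants\<close>

locale unit_decomposition = unital_global_action +
  assumes finite_objs: "finite (objs G s)"
    and units_orthogonal: "\<forall>x\<in>objs G s. \<forall>z\<in>objs G s. x \<noteq> z \<longrightarrow> e x * e z = 0"
    and units_sum: "(\<Sum>x\<in>objs G s. e x) = 1"
begin

lemma sum_mult_units: "a = (\<Sum>x\<in>objs G s. a * e x)"
  using units_sum by (metis mult.right_neutral sum_distrib_left)

lemma sum_mult_unit:
  assumes T: "\<forall>x\<in>objs G s. T x * e x = T x" and z: "z \<in> objs G s"
  shows "(\<Sum>x\<in>objs G s. T x) * e z = T z"
proof -
  have "(\<Sum>x\<in>objs G s. T x) * e z = (\<Sum>x\<in>objs G s. T x * e x * e z)"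
    using T by (simp add: sum_distrib_right)
  also have "\<dots> = T z * e z * e z"
    using units_orthogonal z finite_objs by (subst sum.remove[of _ z]) (auto simp: mult.assoc)
  also have "\<dots> = T z"
    using T z by simp
  finally show ?thesis .
qed

context
  fixes H and P :: "'p set" and r
  assumes H: "subgroupoid H G s t m iv"
    and transversal: "connectivity_transversal H s t (objs G s) P r"
begin

lemma representative_unique:
  assumes "p \<in> P" "q \<in> P" "gconn H s t (r p) x" "gconn H s t (r q) x"
  shows "p = q"
  using assms transversal gconn_sym[OF H] gconn_trans[OF H]
  unfolding connectivity_transversal_def by blast

lemma representative_obj: "p \<in> P \<Longrightarrow> r p \<in> objs G s"
  using transversal unfolding connectivity_transversal_def by blast

lemma representative_choice:
  obtains \<rho> \<tau> where "\<And>x. x \<in> objs G s \<Longrightarrow> \<rho> x \<in> P \<and> \<tau> x \<in> H \<and> s (\<tau> x) = r (\<rho> x) \<and> t (\<tau> x) = x"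
proof -
  have "\<forall>x\<in>objs G s. \<exists>p h. p \<in> P \<and> h \<in> H \<and> s h = r p \<and> t h = x"
    using transversal unfolding connectivity_transversal_def gconn_def by blast
  then show ?thesis
    using that by metis
qed

lemma restrict_units_in_PiE:
  assumes a: "a \<in> fixed_ring H iv e \<alpha> UNIV"
  shows "restrict (\<lambda>p. a * e (r p)) P
           \<in> PiE P (\<lambda>p. fixed_ring (isotropy H s t (r p)) iv e \<alpha> (Sg e (r p)))"
proof (rule iffD2[OF restrict_PiE_iff], rule ballI)
  fix p assume p: "p \<in> P"
  have HG: "H \<subseteq> G" "isotropy H s t (r p) \<subseteq> G"
    using subgroupoid_subset[OF H] unfolding isotropy_def by auto
  have rp: "e (r p) * e (r p) = e (r p)"
    using unit_idem objD(1) representative_obj[OF p] by blast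
  have "\<alpha> k (a * e (r p) * e (s k)) = a * e (r p) * e (t k)" if k: "k \<in> isotropy H s t (r p)" for k
  proof -
    have "k \<in> H" "s k = r p" "t k = r p"
      using k unfolding isotropy_def by auto
    moreover from this(1) have "\<alpha> k (a * e (s k)) = a * e (t k)"
      using a mem_fixed_ring_iff[OF HG(1)] by blast
    ultimately show ?thesis
      using rp by (simp add: mult.assoc)
  qed
  then show "a * e (r p) \<in> fixed_ring (isotropy H s t (r p)) iv e \<alpha> (Sg e (r p))"
    using mem_fixed_ring_iff[OF HG(2)] unfolding Sg_def by blast
qed

lemma fixed_ring_eq_on_representatives:
  assumes a: "a \<in> fixed_ring H iv e \<alpha> UNIV" and b: "b \<in> fixed_ring H iv e \<alpha> UNIV"
    and ab: "\<forall>p\<in>P. a * e (r p) = b * e (r p)"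
  shows "a = b"
proof -
  have HG: "H \<subseteq> G"
    using subgroupoid_subset[OF H] .
  have "a * e x = b * e x" if x: "x \<in> objs G s" for x
  proof -
    obtain p h where "p \<in> P" "h \<in> H" "s h = r p" "t h = x"
      using transversal x unfolding connectivity_transversal_def gconn_def by blast
    then show ?thesis
      using a b ab mem_fixed_ring_iff[OF HG] by metis
  qed
  then show ?thesis
    using sum_mult_units[of a] sum_mult_units[of b] by (metis (no_types, lifting) sum.cong)
qed

context
  fixes f \<rho> \<tau>
  assumes f: "f \<in> PiE P (\<lambda>p. fixed_ring (isotropy H s t (r p)) iv e \<alpha> (Sg e (r p)))"
    and choice: "\<And>x. x \<in> objs G s \<Longrightarrow> \<rho> x \<in> P \<and> \<tau> x \<in> H \<and> s (\<tau> x) = r (\<rho> x) \<and> t (\<tau> x) = x"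
begin

lemma glued_mult_unit:
  assumes x: "x \<in> objs G s"
  shows "(\<Sum>y\<in>objs G s. \<alpha> (\<tau> y) (f (\<rho> y))) * e x = \<alpha> (\<tau> x) (f (\<rho> x))"
proof -
  have "\<alpha> (\<tau> y) (f (\<rho> y)) * e y = \<alpha> (\<tau> y) (f (\<rho> y))" if y: "y \<in> objs G s" for y
  proof -
    have \<tau>: "\<tau> y \<in> G" "\<rho> y \<in> P" "s (\<tau> y) = r (\<rho> y)" "t (\<tau> y) = y"
      using choice[OF y] subgroupoid_subset[OF H] by auto
    have "f (\<rho> y) \<in> Sg e (iv (\<tau> y))"
      using f \<tau>(2,3) unit_inverse[OF \<tau>(1)] unfolding fixed_ring_def Sg_def by auto
    then have "\<alpha> (\<tau> y) (f (\<rho> y)) \<in> Sg e (\<tau> y)"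
      using action_in_Sg \<tau>(1) by blast
    then show ?thesis
      using mem_Sg_iff[OF \<tau>(1)] unit_target[OF \<tau>(1)] \<tau>(4) by simp
  qed
  then show ?thesis
    using sum_mult_unit[of "\<lambda>y. \<alpha> (\<tau> y) (f (\<rho> y))" x] x by blast
qed

lemma glued_restrict:
  assumes p: "p \<in> P"
  shows "(\<Sum>y\<in>objs G s. \<alpha> (\<tau> y) (f (\<rho> y))) * e (r p) = f p"
proof -
  have rp: "r p \<in> objs G s"
    using representative_obj[OF p] .
  have "gconn H s t (r (\<rho> (r p))) (r p)"
    using choice[OF rp] unfolding gconn_def by blast
  then have "gconn H s t (r p) (r p)"
    using gconn_sym[OF H] gconn_trans[OF H] by blast
  then have "\<rho> (r p) = p"
    using representative_unique[of "\<rho> (r p)" p "r p"] \<open>gconn H s t (r (\<rho> (r p))) (r p)\<close> choice[OF rp] p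
    by blast
  then have "\<tau> (r p) \<in> H" "s (\<tau> (r p)) = r p" "t (\<tau> (r p)) = r p"
    using choice[OF rp] by auto
  moreover have "f p \<in> fixed_ring (isotropy H s t (r p)) iv e \<alpha> (Sg e (r p))"
    using PiE_mem[OF f p] .
  ultimately show ?thesis
    using glued_mult_unit[OF rp] isotropy_fixes[OF _ subgroupoid_subset[OF H], of "f p" "r p" "\<tau> (r p)"]
      \<open>\<rho> (r p) = p\<close> by simp
qed

lemma glued_fixed: "(\<Sum>y\<in>objs G s. \<alpha> (\<tau> y) (f (\<rho> y))) \<in> fixed_ring H iv e \<alpha> UNIV"
  unfolding mem_fixed_ring_iff[OF subgroupoid_subset[OF H]]
proof (intro conjI ballI UNIV_I)
  fix k assume k: "k \<in> H"
  then have kG: "k \<in> G"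
    using subgroupoid_subset[OF H] by blast
  define u where "u = s k"
  define v where "v = t k"
  have uv: "u \<in> objs G s" "v \<in> objs G s"
    using kG source_target(2,5) unfolding u_def v_def objs_def by (auto intro: image_eqI[of _ s "t k"])
  have "gconn H s t (r (\<rho> u)) v"
    using choice[OF uv(1)] k gconn_trans[OF H] unfolding u_def v_def gconn_def by blast
  moreover have "gconn H s t (r (\<rho> v)) v"
    using choice[OF uv(2)] unfolding gconn_def by blast
  ultimately have same: "\<rho> u = \<rho> v"
    using representative_unique choice uv by blast
  have "f (\<rho> v) \<in> fixed_ring (isotropy H s t (r (\<rho> v))) iv e \<alpha> (Sg e (r (\<rho> v)))"
    using f choice[OF uv(2)] by (simp add: PiE_iff)
  then have "\<alpha> k (\<alpha> (\<tau> u) (f (\<rho> u))) = \<alpha> (\<tau> v) (f (\<rho> v))"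
    using transport_independent[OF H, of "f (\<rho> v)" _ "\<tau> u" k "\<tau> v"] choice[OF uv(1)] choice[OF uv(2)]
      k same unfolding u_def v_def by auto
  then show "\<alpha> k ((\<Sum>y\<in>objs G s. \<alpha> (\<tau> y) (f (\<rho> y))) * e (s k))
      = (\<Sum>y\<in>objs G s. \<alpha> (\<tau> y) (f (\<rho> y))) * e (t k)"
    using glued_mult_unit uv unfolding u_def v_def by simp
qed

end

lemma fixed_ring_extends:
  assumes f: "f \<in> PiE P (\<lambda>p. fixed_ring (isotropy H s t (r p)) iv e \<alpha> (Sg e (r p)))"
  shows "\<exists>a\<in>fixed_ring H iv e \<alpha> UNIV. restrict (\<lambda>p. a * e (r p)) P = f"
proof -
  obtain \<rho> \<tau> where choice:
    "\<And>x. x \<in> objs G s \<Longrightarrow> \<rho> x \<in> P \<and> \<tau> x \<in> H \<and> s (\<tau> x) = r (\<rho> x) \<and> t (\<tau> x) = x"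
    using representative_choice by blast
  have "restrict (\<lambda>p. (\<Sum>y\<in>objs G s. \<alpha> (\<tau> y) (f (\<rho> y))) * e (r p)) P = f"
    using glued_restrict[OF f choice] PiE_arb[OF f] by (auto simp: fun_eq_iff)
  then show ?thesis
    using glued_fixed[OF f choice] by blast
qed

theorem fixed_ring_decomposition:
  "bij_betw (\<lambda>a. restrict (\<lambda>p. a * e (r p)) P) (fixed_ring H iv e \<alpha> UNIV)
     (PiE P (\<lambda>p. fixed_ring (isotropy H s t (r p)) iv e \<alpha> (Sg e (r p))))"
  unfolding bij_betw_def
proof (intro conjI inj_onI subset_antisym subsetI)
  fix a b assume "a \<in> fixed_ring H iv e \<alpha> UNIV" "b \<in> fixed_ring H iv e \<alpha> UNIV"
    and "restrict (\<lambda>p. a * e (r p)) P = restrict (\<lambda>p. b * e (r p)) P"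
  then show "a = b"
    using fixed_ring_eq_on_representatives by (metis restrict_apply')
next
  fix f assume "f \<in> (\<lambda>a. restrict (\<lambda>p. a * e (r p)) P) ` fixed_ring H iv e \<alpha> UNIV"
  then show "f \<in> PiE P (\<lambda>p. fixed_ring (isotropy H s t (r p)) iv e \<alpha> (Sg e (r p)))"
    using restrict_units_in_PiE by blast
next
  fix f assume "f \<in> PiE P (\<lambda>p. fixed_ring (isotropy H s t (r p)) iv e \<alpha> (Sg e (r p)))"
  then show "f \<in> (\<lambda>a. restrict (\<lambda>p. a * e (r p)) P) ` fixed_ring H iv e \<alpha> UNIV"
    using fixed_ring_extends by blast
qed

end

end

theorem proposition5p14:
  fixes G H :: "'g set" and s t iv :: "'g \<Rightarrow> 'g" and m :: "'g \<Rightarrow> 'g \<Rightarrow> 'g"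
    and e :: "'g \<Rightarrow> 'a::comm_ring_1" and \<alpha> :: "'g \<Rightarrow> 'a \<Rightarrow> 'a"
    and y :: "'g set \<Rightarrow> 'g set \<Rightarrow> 'g"
  assumes grpd: "groupoid G s t m iv" and fin: "finite G"
    and act: "unital_partial_action G s t m iv e \<alpha>"
    and glob: "global_action G s t m iv e \<alpha>"
    and nz: "\<forall>g\<in>G. e g \<noteq> 0"
    and dsum_orth: "\<forall>x\<in>objs G s. \<forall>z\<in>objs G s. x \<noteq> z \<longrightarrow> e x * e z = 0"
    and dsum_one: "(\<Sum>x\<in>objs G s. e x) = 1"
    and galois: "partial_galois G s iv e \<alpha>"
    and wide: "wide_subgroupoid H G s t m iv"
    and ychoice: "\<forall>Gj\<in>components G s t. \<forall>C\<in>components (H \<inter> Gj) s t. y Gj C \<in> objs C s"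
  shows "\<exists>\<phi> :: 'a \<Rightarrow> ('g set \<times> 'g set \<Rightarrow> 'a).
           bij_betw \<phi> (fixed_ring H iv e \<alpha> UNIV)
             (PiE {(Gj, C). Gj \<in> components G s t \<and> C \<in> components (H \<inter> Gj) s t}
               (\<lambda>(Gj, C). fixed_ring (isotropy C s t (y Gj C)) iv e \<alpha> (Sg e (y Gj C)))) \<and>
           (\<forall>a\<in>fixed_ring H iv e \<alpha> UNIV. \<forall>b\<in>fixed_ring H iv e \<alpha> UNIV.
              \<forall>p\<in>{(Gj, C). Gj \<in> components G s t \<and> C \<in> components (H \<inter> Gj) s t}.
                \<phi> (a + b) p = \<phi> a p + \<phi> b p \<and> \<phi> (a * b) p = \<phi> a p * \<phi> b p) \<and>
           (\<forall>p\<in>{(Gj, C). Gj \<in> components G s t \<and> C \<in> components (H \<inter> Gj) s t}.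
                \<phi> 1 p = e (case p of (Gj, C) \<Rightarrow> y Gj C))"
proof -
  let ?P = "{(Gj, C). Gj \<in> components G s t \<and> C \<in> components (H \<inter> Gj) s t}"
  let ?r = "\<lambda>(Gj, C). y Gj C"
  interpret unit_decomposition G s t iv m e \<alpha>
    using grpd act glob fin dsum_orth dsum_one by unfold_locales (simp_all add: objs_def)
  note H = wide_subgroupoidD(1)[OF wide]
  note transversal = component_representatives_transversal[OF wide ychoice]
  have "PiE ?P (\<lambda>(Gj, C). fixed_ring (isotropy C s t (y Gj C)) iv e \<alpha> (Sg e (y Gj C)))
      = PiE ?P (\<lambda>p. fixed_ring (isotropy H s t (?r p)) iv e \<alpha> (Sg e (?r p)))"
    using isotropy_component[OF H] ychoice by (intro PiE_cong) auto
  then have "bij_betw (\<lambda>a. restrict (\<lambda>p. a * e (?r p)) ?P) (fixed_ring H iv e \<alpha> UNIV)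
      (PiE ?P (\<lambda>(Gj, C). fixed_ring (isotropy C s t (y Gj C)) iv e \<alpha> (Sg e (y Gj C))))"
    using fixed_ring_decomposition[OF H transversal] by simp
  moreover have "e (?r p) * e (?r p) = e (?r p)" if "p \<in> ?P" for p
    using unit_idem objD(1) representative_obj[OF H transversal that] by blast
  ultimately show ?thesis
    by (intro exI[of _ "\<lambda>a. restrict (\<lambda>p. a * e (?r p)) ?P"])
      (auto simp: distrib_right mult.assoc mult.left_commute)
qed

end
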